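(* Let $(A,L',L'')$ be an almost twilled Lie-Rinehart algebra with $L'$ finitely generated and projective as an $A$-module, and consider $\mathcal L'=\mathrm{Alt}_A(L'',L')$ with its bracket $[\cdot,\cdot]'$ and operator $d''$. Given $x,y\in L'$ (viewed as elements of degree $0$ in $\mathcal L'$), one has $d''[x,y]'=[d''x,y]'+[x,d''y]'$ if and only if $\xi\cdot[x,y]'=[\xi\cdot x,y]'+[x,\xi\cdot y]'-(x\cdot\xi)\cdot y+(y\cdot\xi)\cdot x$ for every $\xi\in L''$. Consequently, $d''[x,y]'=[d''x,y]'+[x,d''y]'$ holds for all $x,y\in L'$ if and only if $\xi\cdot[x,y]'=[\xi\cdot x,y]'+[x,\xi\cdot y]'-(x\cdot\xi)\cdot y+(y\cdot\xi)\cdot x$ holds for all $x,y\in L'$, $\xi\in L''$.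
   Context: $R$ commutative ring, $A$ commutative $R$-algebra. Lie-Rinehart algebra $(A,L)$: $R$-Lie algebra and $A$-module $L$ with Lie morphism $L\to\mathrm{Der}_R(A)$ such that $(a\alpha)(b)=a\,\alpha(b)$, $[\alpha,a\beta]=\alpha(a)\beta+a[\alpha,\beta]$. Left $(A,L)$-module: $A$-module with left $L$-module structure with $(a\alpha)\cdot m=a(\alpha\cdot m)$, $\alpha\cdot(am)=\alpha(a)m+a(\alpha\cdot m)$. Almost twilled Lie-Rinehart algebra $(A,L',L'')$: Lie-Rinehart algebras $(A,L')$, $(A,L'')$ with brackets $[\cdot,\cdot]',[\cdot,\cdot]''$, a left $(A,L')$-module structure $(x,\xi)\mapsto x\cdot\xi$ on $L''$, a left $(A,L'')$-module structure $(\xi,x)\mapsto\xi\cdot x$ on $L'$. $\mathcal A''=\mathrm{Alt}_A(L'',A)$ (graded by number of arguments), with $L'$-action $(x\cdot\phi)(\xi_1,..,\xi_q)=x(\phi(\xi_1,..,\xi_q))-\sum_i\phi(..,x\cdot\xi_i,..)$. $\mathcal L'=\mathcal A''\otimes_AL'\cong\mathrm{Alt}_A(L'',L')$ with bracket $[\alpha\otimes x,\beta\otimes y]'=\alpha\beta\otimes[x,y]'+\alpha(x\cdot\beta)\otimes y-(-1)^{|\alpha||\beta|}\beta(y\cdot\alpha)\otimes x$. The operator $d''$ on $\mathrm{Alt}_A(L'',L')$ is the Lie-Rinehart differential of $(A,L'')$ with values in the left $(A,L'')$-module $L'$; in particular $(d''x)(\xi)=\xi\cdot x$ for $x\in L'$,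 $\xi\in L''$ (up to the sign convention $(df)(\alpha_1,\dots,\alpha_n)=(-1)^n[\sum_i(-1)^{i-1}\alpha_i\cdot f(\dots\widehat{\alpha_i}\dots)+\sum_{j<k}(-1)^{j+k}f([\alpha_j,\alpha_k],\dots)]$). *)

theory Defs
  imports Main
begin

text \<open>R is the type 'r, A is the type 'a, with structure map iota : R -> A.
  An A-module is an abelian group type together with a scalar multiplication.\<close>

definition ring_hom_map :: "('r::comm_ring_1 \<Rightarrow> 'a::comm_ring_1) \<Rightarrow> bool" where
  "ring_hom_map \<iota> \<longleftrightarrow> \<iota> 1 = 1 \<and> (\<forall>r s. \<iota> (r + s) = \<iota> r + \<iota> s) \<and> (\<forall>r s. \<iota> (r * s) = \<iota> r * \<iota> s)"

definition amodule :: "('a::comm_ring_1 \<Rightarrow> 'm::ab_group_add \<Rightarrow> 'm) \<Rightarrow> bool" where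
  "amodule sm \<longleftrightarrow>
     (\<forall>a b x. sm (a + b) x = sm a x + sm b x) \<and>
     (\<forall>a x y. sm a (x + y) = sm a x + sm a y) \<and>
     (\<forall>a b x. sm (a * b) x = sm a (sm b x)) \<and>
     (\<forall>x. sm 1 x = x)"

definition alin :: "('a::comm_ring_1 \<Rightarrow> 'm::ab_group_add \<Rightarrow> 'm) \<Rightarrow> ('a \<Rightarrow> 'n::ab_group_add \<Rightarrow> 'n)
                     \<Rightarrow> ('m \<Rightarrow> 'n) \<Rightarrow> bool" where
  "alin sm sn f \<longleftrightarrow> (\<forall>x y. f (x + y) = f x + f y) \<and> (\<forall>a x. f (sm a x) = sn a (f x))"

definition rderivation :: "('r::comm_ring_1 \<Rightarrow> 'a::comm_ring_1) \<Rightarrow> ('a \<Rightarrow> 'a) \<Rightarrow> bool" where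
  "rderivation \<iota> D \<longleftrightarrow>
     (\<forall>a b. D (a + b) = D a + D b) \<and>
     (\<forall>r a. D (\<iota> r * a) = \<iota> r * D a) \<and>
     (\<forall>a b. D (a * b) = a * D b + b * D a)"

definition rlie :: "('r::comm_ring_1 \<Rightarrow> 'a::comm_ring_1) \<Rightarrow> ('a \<Rightarrow> 'l::ab_group_add \<Rightarrow> 'l)
                     \<Rightarrow> ('l \<Rightarrow> 'l \<Rightarrow> 'l) \<Rightarrow> bool" where
  "rlie \<iota> sm br \<longleftrightarrow>
     (\<forall>x y z. br (x + y) z = br x z + br y z) \<and>
     (\<forall>x y z. br x (y + z) = br x y + br x z) \<and>
     (\<forall>r x y. br (sm (\<iota> r) x) y = sm (\<iota> r) (br x y)) \<and>
     (\<forall>r x y. br x (sm (\<iota> r) y) = sm (\<iota> r) (br x y)) \<and>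
     (\<forall>x. br x x = 0) \<and>
     (\<forall>x y z. br x (br y z) + br y (br z x) + br z (br x y) = 0)"

text \<open>Lie-Rinehart algebra (A,L): sm = A-module structure, br = bracket, anc = anchor L -> Der_R(A).\<close>
definition lie_rinehart :: "('r::comm_ring_1 \<Rightarrow> 'a::comm_ring_1) \<Rightarrow> ('a \<Rightarrow> 'l::ab_group_add \<Rightarrow> 'l)
                     \<Rightarrow> ('l \<Rightarrow> 'l \<Rightarrow> 'l) \<Rightarrow> ('l \<Rightarrow> 'a \<Rightarrow> 'a) \<Rightarrow> bool" where
  "lie_rinehart \<iota> sm br anc \<longleftrightarrow>
     amodule sm \<and> rlie \<iota> sm br \<and>
     (\<forall>x. rderivation \<iota> (anc x)) \<and>
     (\<forall>x y. anc (x + y) = (\<lambda>a. anc x a + anc y a)) \<and>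
     (\<forall>r x. anc (sm (\<iota> r) x) = (\<lambda>a. \<iota> r * anc x a)) \<and>
     (\<forall>x y. anc (br x y) = (\<lambda>a. anc x (anc y a) - anc y (anc x a))) \<and>
     (\<forall>a x b. anc (sm a x) b = a * anc x b) \<and>
     (\<forall>x a y. br x (sm a y) = sm (anc x a) y + sm a (br x y))"

definition left_lr_module :: "('r::comm_ring_1 \<Rightarrow> 'a::comm_ring_1) \<Rightarrow> ('a \<Rightarrow> 'l::ab_group_add \<Rightarrow> 'l)
                     \<Rightarrow> ('l \<Rightarrow> 'l \<Rightarrow> 'l) \<Rightarrow> ('l \<Rightarrow> 'a \<Rightarrow> 'a)
                     \<Rightarrow> ('a \<Rightarrow> 'm::ab_group_add \<Rightarrow> 'm) \<Rightarrow> ('l \<Rightarrow> 'm \<Rightarrow> 'm) \<Rightarrow> bool" where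
  "left_lr_module \<iota> sm br anc smM act \<longleftrightarrow>
     amodule smM \<and>
     (\<forall>x y m. act (x + y) m = act x m + act y m) \<and>
     (\<forall>x m n. act x (m + n) = act x m + act x n) \<and>
     (\<forall>r x m. act (sm (\<iota> r) x) m = smM (\<iota> r) (act x m)) \<and>
     (\<forall>r x m. act x (smM (\<iota> r) m) = smM (\<iota> r) (act x m)) \<and>
     (\<forall>x y m. act (br x y) m = act x (act y m) - act y (act x m)) \<and>
     (\<forall>a x m. act (sm a x) m = smM a (act x m)) \<and>
     (\<forall>x a m. act x (smM a m) = smM (anc x a) m + smM a (act x m))"

text \<open>Almost twilled Lie-Rinehart algebra (A, L', L'').
  act12 x xi = x . xi  (L' acting on L''),  act21 xi x = xi . x  (L'' acting on L').\<close>
definition almost_twilled ::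
  "('r::comm_ring_1 \<Rightarrow> 'a::comm_ring_1)
   \<Rightarrow> ('a \<Rightarrow> 'l1::ab_group_add \<Rightarrow> 'l1) \<Rightarrow> ('l1 \<Rightarrow> 'l1 \<Rightarrow> 'l1) \<Rightarrow> ('l1 \<Rightarrow> 'a \<Rightarrow> 'a)
   \<Rightarrow> ('a \<Rightarrow> 'l2::ab_group_add \<Rightarrow> 'l2) \<Rightarrow> ('l2 \<Rightarrow> 'l2 \<Rightarrow> 'l2) \<Rightarrow> ('l2 \<Rightarrow> 'a \<Rightarrow> 'a)
   \<Rightarrow> ('l1 \<Rightarrow> 'l2 \<Rightarrow> 'l2) \<Rightarrow> ('l2 \<Rightarrow> 'l1 \<Rightarrow> 'l1) \<Rightarrow> bool" where
  "almost_twilled \<iota> sm1 br1 anc1 sm2 br2 anc2 act12 act21 \<longleftrightarrow>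
     ring_hom_map \<iota> \<and>
     lie_rinehart \<iota> sm1 br1 anc1 \<and> lie_rinehart \<iota> sm2 br2 anc2 \<and>
     left_lr_module \<iota> sm1 br1 anc1 sm2 act12 \<and>
     left_lr_module \<iota> sm2 br2 anc2 sm1 act21"

text \<open>Finitely generated projective A-module, via a finite dual basis
  (e_i, f_i) with f_i A-linear and x = sum_i f_i(x) e_i.\<close>
definition fg_projective :: "('a::comm_ring_1 \<Rightarrow> 'l::ab_group_add \<Rightarrow> 'l) \<Rightarrow> bool" where
  "fg_projective sm \<longleftrightarrow> amodule sm \<and>
     (\<exists>db :: (('l \<Rightarrow> 'a) \<times> 'l) list.
        (\<forall>(f, e) \<in> set db. alin sm (*) f) \<and>
        (\<forall>x. x = (\<Sum>(f, e) \<leftarrow> db. sm (f x) e)))"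

text \<open>Degree-0 elements of A'' are elements of A; degree-1 elements are A-linear maps L'' -> A.
  L'-action on degree-1 elements of A'':  (x . alpha)(xi) = x(alpha xi) - alpha (x . xi).\<close>
definition act_A1 :: "('l1 \<Rightarrow> 'a::comm_ring_1 \<Rightarrow> 'a) \<Rightarrow> ('l1 \<Rightarrow> 'l2 \<Rightarrow> 'l2)
                       \<Rightarrow> 'l1 \<Rightarrow> ('l2 \<Rightarrow> 'a) \<Rightarrow> ('l2 \<Rightarrow> 'a)" where
  "act_A1 anc1 act12 x \<alpha> = (\<lambda>\<xi>. anc1 x (\<alpha> \<xi>) - \<alpha> (act12 x \<xi>))"

text \<open>A representation of a degree-1 element phi of Alt_A(L'',L') as an element
  sum_i alpha_i \<otimes> x_i of A''^1 \<otimes>_A L'.\<close>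
definition is_decomp :: "('a::comm_ring_1 \<Rightarrow> 'l2::ab_group_add \<Rightarrow> 'l2) \<Rightarrow> ('a \<Rightarrow> 'l1::ab_group_add \<Rightarrow> 'l1)
                          \<Rightarrow> ('l2 \<Rightarrow> 'l1) \<Rightarrow> (('l2 \<Rightarrow> 'a) \<times> 'l1) list \<Rightarrow> bool" where
  "is_decomp sm2 sm1 \<phi> ds \<longleftrightarrow>
     (\<forall>(\<alpha>, x) \<in> set ds. alin sm2 (*) \<alpha>) \<and>
     (\<forall>\<xi>. \<phi> \<xi> = (\<Sum>(\<alpha>, x) \<leftarrow> ds. sm1 (\<alpha> \<xi>) x))"

text \<open>Bracket [alpha \<otimes> x, beta \<otimes> y]' = alpha beta \<otimes> [x,y]' + alpha (x . beta) \<otimes> y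
   - (-1)^(|alpha||beta|) beta (y . alpha) \<otimes> x, for (degree 1, degree 0) (beta = 1)
   and (degree 0, degree 1) (alpha = 1), extended additively and read in Alt_A(L'',L').\<close>
definition br10_tensor where
  "br10_tensor sm1 br1 anc1 act12 ds y =
     (\<lambda>\<xi>. \<Sum>(\<alpha>, x) \<leftarrow> ds. sm1 (\<alpha> \<xi>) (br1 x y) + sm1 (\<alpha> \<xi> * anc1 x 1) y
                          - sm1 (act_A1 anc1 act12 y \<alpha> \<xi>) x)"

definition br01_tensor where
  "br01_tensor sm1 br1 anc1 act12 x ds =
     (\<lambda>\<xi>. \<Sum>(\<beta>, y) \<leftarrow> ds. sm1 (\<beta> \<xi>) (br1 x y) + sm1 (act_A1 anc1 act12 x \<beta> \<xi>) y
                          - sm1 (\<beta> \<xi> * anc1 y 1) x)"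

text \<open>The bracket on Alt_A(L'',L') in bidegrees (1,0) and (0,1), transported through the
  identification A'' \<otimes>_A L' = Alt_A(L'',L') (valid for L' f.g. projective).\<close>
definition brL10 where
  "brL10 sm1 sm2 br1 anc1 act12 \<phi> y =
     br10_tensor sm1 br1 anc1 act12 (SOME ds. is_decomp sm2 sm1 \<phi> ds) y"

definition brL01 where
  "brL01 sm1 sm2 br1 anc1 act12 x \<phi> =
     br01_tensor sm1 br1 anc1 act12 x (SOME ds. is_decomp sm2 sm1 \<phi> ds)"

definition dpp :: "('l2 \<Rightarrow> 'l1 \<Rightarrow> 'l1) \<Rightarrow> 'l1 \<Rightarrow> ('l2 \<Rightarrow> 'l1)" where
  "dpp act21 x = (\<lambda>\<xi>. act21 \<xi> x)"

end

theory Submission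
  imports Defs
begin

text \<open>On an element \<open>\<Sum> \<alpha>\<^sub>i \<otimes> x\<^sub>i\<close> of \<open>A'' \<otimes>\<^sub>A L'\<close> representing \<open>\<phi> : L'' \<rightarrow> L'\<close>, the tensor
  formulas for the bracket collapse to the intrinsic expressions
  \<open>[\<phi>, y]'(\<xi>) = [\<phi> \<xi>, y]' + \<phi>(y \<cdot> \<xi>)\<close> and \<open>[x, \<psi>]'(\<xi>) = [x, \<psi> \<xi>]' - \<psi>(x \<cdot> \<xi>)\<close>;
  the terms involving the anchor cancel by the Lie-Rinehart Leibniz rule, so the result does
  not depend on the chosen representation. Since \<open>L'\<close> is finitely generated projective,
  the \<open>A\<close>-linear map \<open>d''x = (\<xi> \<mapsto> \<xi> \<cdot> x)\<close> has such a representation, and evaluating both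
  sides of \<open>d''[x,y]' = [d''x, y]' + [x, d''y]'\<close> at \<open>\<xi>\<close> gives exactly the stated identity.\<close>

lemma amodule_smult_add_left: "amodule sm \<Longrightarrow> sm (a + b) v = sm a v + sm b v"
  and amodule_smult_add_right: "amodule sm \<Longrightarrow> sm a (v + w) = sm a v + sm a w"
  by (simp_all add: amodule_def)

lemma amodule_smult_zero_left: "amodule sm \<Longrightarrow> sm 0 v = 0"
  using amodule_smult_add_left[of sm 0 0 v] by simp

lemma amodule_smult_diff_left: "amodule sm \<Longrightarrow> sm (a - b) v = sm a v - sm b v"
  using amodule_smult_add_left[of sm "a - b" b v] by (simp add: eq_diff_eq)

lemma amodule_smult_minus_right:
  assumes "amodule sm"
  shows "sm a (- v) = - sm a v"
  by (metis add.left_inverse add_cancel_right_right amodule_smult_add_right[OF assms]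
      eq_neg_iff_add_eq_0)

lemma rlie_add_left: "rlie \<iota> sm br \<Longrightarrow> br (x + y) z = br x z + br y z"
  and rlie_add_right: "rlie \<iota> sm br \<Longrightarrow> br x (y + z) = br x y + br x z"
  and rlie_self: "rlie \<iota> sm br \<Longrightarrow> br x x = 0"
  by (simp_all add: rlie_def)

lemma rlie_skew:
  assumes "rlie \<iota> sm br"
  shows "br x y = - br y x"
proof -
  have "0 = br (x + y) (x + y)" using rlie_self[OF assms] by simp
  also have "\<dots> = br x (x + y) + br y (x + y)" by (rule rlie_add_left[OF assms])
  also have "\<dots> = br x y + br y x" by (simp add: rlie_add_right[OF assms] rlie_self[OF assms])
  finally show ?thesis by (metis eq_neg_iff_add_eq_0)
qed

lemma rderivation_one:
  assumes "rderivation \<iota> D"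
  shows "D 1 = 0"
  using assms unfolding rderivation_def by (metis add_cancel_left_right mult_1)

lemma lie_rinehart_amodule: "lie_rinehart \<iota> sm br anc \<Longrightarrow> amodule sm"
  and lie_rinehart_rlie: "lie_rinehart \<iota> sm br anc \<Longrightarrow> rlie \<iota> sm br"
  and lie_rinehart_smult_right:
    "lie_rinehart \<iota> sm br anc \<Longrightarrow> br x (sm a y) = sm (anc x a) y + sm a (br x y)"
  by (simp_all add: lie_rinehart_def)

lemma lie_rinehart_anchor_one: "lie_rinehart \<iota> sm br anc \<Longrightarrow> anc x 1 = 0"
  unfolding lie_rinehart_def by (blast intro: rderivation_one)

lemma lie_rinehart_smult_left:
  assumes "lie_rinehart \<iota> sm br anc"
  shows "br (sm a x) y = sm a (br x y) - sm (anc y a) x"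
proof -
  note skew = rlie_skew[OF lie_rinehart_rlie[OF assms]]
  have "br (sm a x) y = - br y (sm a x)" by (rule skew)
  also have "\<dots> = - sm (anc y a) x + sm a (- br y x)"
    by (simp add: lie_rinehart_smult_right[OF assms]
        amodule_smult_minus_right[OF lie_rinehart_amodule[OF assms]])
  finally show ?thesis by (simp add: skew[of x y])
qed

lemma br10_tensor_eq:
  assumes "lie_rinehart \<iota> sm1 br1 anc1"
  shows "br10_tensor sm1 br1 anc1 act12 ds y \<xi> =
    br1 (\<Sum>(\<alpha>, x) \<leftarrow> ds. sm1 (\<alpha> \<xi>) x) y + (\<Sum>(\<alpha>, x) \<leftarrow> ds. sm1 (\<alpha> (act12 y \<xi>)) x)"
proof (induction ds)
  case Nil
  show ?case
    using rlie_add_left[OF lie_rinehart_rlie[OF assms], of 0 0 y] by (simp add: br10_tensor_def)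
next
  case (Cons p ds)
  then show ?case
    by (cases p) (simp add: br10_tensor_def act_A1_def algebra_simps
        rlie_add_left[OF lie_rinehart_rlie[OF assms]] lie_rinehart_smult_left[OF assms]
        lie_rinehart_anchor_one[OF assms] amodule_smult_zero_left[OF lie_rinehart_amodule[OF assms]]
        amodule_smult_diff_left[OF lie_rinehart_amodule[OF assms]])
qed

lemma br01_tensor_eq:
  assumes "lie_rinehart \<iota> sm1 br1 anc1"
  shows "br01_tensor sm1 br1 anc1 act12 x ds \<xi> =
    br1 x (\<Sum>(\<beta>, y) \<leftarrow> ds. sm1 (\<beta> \<xi>) y) - (\<Sum>(\<beta>, y) \<leftarrow> ds. sm1 (\<beta> (act12 x \<xi>)) y)"
proof (induction ds)
  case Nil
  show ?case
    using rlie_add_right[OF lie_rinehart_rlie[OF assms], of x 0 0] by (simp add: br01_tensor_def)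
next
  case (Cons p ds)
  then show ?case
    by (cases p) (simp add: br01_tensor_def act_A1_def algebra_simps
        rlie_add_right[OF lie_rinehart_rlie[OF assms]] lie_rinehart_smult_right[OF assms]
        lie_rinehart_anchor_one[OF assms] amodule_smult_zero_left[OF lie_rinehart_amodule[OF assms]]
        amodule_smult_diff_left[OF lie_rinehart_amodule[OF assms]])
qed

lemma is_decomp_eval:
  "is_decomp sm2 sm1 \<phi> ds \<Longrightarrow> (\<Sum>(\<alpha>, x) \<leftarrow> ds. sm1 (\<alpha> \<xi>) x) = \<phi> \<xi>"
  unfolding is_decomp_def by simp

lemma brL10_eq:
  assumes "lie_rinehart \<iota> sm1 br1 anc1" and "\<exists>ds. is_decomp sm2 sm1 \<phi> ds"
  shows "brL10 sm1 sm2 br1 anc1 act12 \<phi> y \<xi> = br1 (\<phi> \<xi>) y + \<phi> (act12 y \<xi>)"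
  unfolding brL10_def br10_tensor_eq[OF assms(1)] is_decomp_eval[OF someI_ex[OF assms(2)]] ..

lemma brL01_eq:
  assumes "lie_rinehart \<iota> sm1 br1 anc1" and "\<exists>ds. is_decomp sm2 sm1 \<psi> ds"
  shows "brL01 sm1 sm2 br1 anc1 act12 x \<psi> \<xi> = br1 x (\<psi> \<xi>) - \<psi> (act12 x \<xi>)"
  unfolding brL01_def br01_tensor_eq[OF assms(1)] is_decomp_eval[OF someI_ex[OF assms(2)]] ..

lemma alin_comp: "alin sm2 sm1 \<phi> \<Longrightarrow> alin sm1 sn f \<Longrightarrow> alin sm2 sn (f \<circ> \<phi>)"
  unfolding alin_def by simp

lemma fg_projective_is_decomp_exists:
  assumes "fg_projective sm1" and "alin sm2 sm1 \<phi>"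
  shows "\<exists>ds. is_decomp sm2 sm1 \<phi> ds"
proof -
  obtain db where db_lin: "\<forall>(f, e) \<in> set db. alin sm1 (*) f"
    and db_basis: "\<And>v. v = (\<Sum>(f, e) \<leftarrow> db. sm1 (f v) e)"
    using assms(1) unfolding fg_projective_def by blast
  have "is_decomp sm2 sm1 \<phi> (map (\<lambda>(f, e). (f \<circ> \<phi>, e)) db)"
    unfolding is_decomp_def
    using db_lin alin_comp[OF assms(2)] db_basis by (auto simp: o_def split_def)
  then show ?thesis ..
qed

lemma alin_dpp:
  assumes "left_lr_module \<iota> sm2 br2 anc2 sm1 act21"
  shows "alin sm2 sm1 (dpp act21 x)"
  using assms unfolding left_lr_module_def alin_def dpp_def by simp

lemma brL10_brL01_dpp_eq:
  assumes "almost_twilled \<iota> sm1 br1 anc1 sm2 br2 anc2 act12 act21" and "fg_projective sm1"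
  shows "brL10 sm1 sm2 br1 anc1 act12 (dpp act21 x) y \<xi>
           + brL01 sm1 sm2 br1 anc1 act12 x (dpp act21 y) \<xi> =
    br1 (act21 \<xi> x) y + br1 x (act21 \<xi> y) - act21 (act12 x \<xi>) y + act21 (act12 y \<xi>) x"
proof -
  have lr: "lie_rinehart \<iota> sm1 br1 anc1" and mod: "left_lr_module \<iota> sm2 br2 anc2 sm1 act21"
    using assms(1) unfolding almost_twilled_def by auto
  have "\<And>z. \<exists>ds. is_decomp sm2 sm1 (dpp act21 z) ds"
    using fg_projective_is_decomp_exists[OF assms(2) alin_dpp[OF mod]] .
  then show ?thesis
    by (simp add: brL10_eq[OF lr] brL01_eq[OF lr] dpp_def algebra_simps)
qed

theorem lemma3p3:
  fixes \<iota> :: "'r::comm_ring_1 \<Rightarrow> 'a::comm_ring_1"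
    and sm1 :: "'a \<Rightarrow> 'l1::ab_group_add \<Rightarrow> 'l1" and br1 :: "'l1 \<Rightarrow> 'l1 \<Rightarrow> 'l1" and anc1 :: "'l1 \<Rightarrow> 'a \<Rightarrow> 'a"
    and sm2 :: "'a \<Rightarrow> 'l2::ab_group_add \<Rightarrow> 'l2" and br2 :: "'l2 \<Rightarrow> 'l2 \<Rightarrow> 'l2" and anc2 :: "'l2 \<Rightarrow> 'a \<Rightarrow> 'a"
    and act12 :: "'l1 \<Rightarrow> 'l2 \<Rightarrow> 'l2" and act21 :: "'l2 \<Rightarrow> 'l1 \<Rightarrow> 'l1"
  assumes "almost_twilled \<iota> sm1 br1 anc1 sm2 br2 anc2 act12 act21"
    and "fg_projective sm1"
  shows "(\<forall>x y.
           (dpp act21 (br1 x y) =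
              (\<lambda>\<xi>. brL10 sm1 sm2 br1 anc1 act12 (dpp act21 x) y \<xi>
                   + brL01 sm1 sm2 br1 anc1 act12 x (dpp act21 y) \<xi>))
           \<longleftrightarrow>
           (\<forall>\<xi>. act21 \<xi> (br1 x y) =
                   br1 (act21 \<xi> x) y + br1 x (act21 \<xi> y)
                   - act21 (act12 x \<xi>) y + act21 (act12 y \<xi>) x))
       \<and>
       ((\<forall>x y. dpp act21 (br1 x y) =
              (\<lambda>\<xi>. brL10 sm1 sm2 br1 anc1 act12 (dpp act21 x) y \<xi>
                   + brL01 sm1 sm2 br1 anc1 act12 x (dpp act21 y) \<xi>))
        \<longleftrightarrow>
        (\<forall>x y \<xi>. act21 \<xi> (br1 x y) =
                   br1 (act21 \<xi> x) y + br1 x (act21 \<xi> y)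
                   - act21 (act12 x \<xi>) y + act21 (act12 y \<xi>) x))"
proof -
  have "\<And>x y. dpp act21 (br1 x y) =
              (\<lambda>\<xi>. brL10 sm1 sm2 br1 anc1 act12 (dpp act21 x) y \<xi>
                   + brL01 sm1 sm2 br1 anc1 act12 x (dpp act21 y) \<xi>)
           \<longleftrightarrow>
           (\<forall>\<xi>. act21 \<xi> (br1 x y) =
                   br1 (act21 \<xi> x) y + br1 x (act21 \<xi> y)
                   - act21 (act12 x \<xi>) y + act21 (act12 y \<xi>) x)"
    unfolding fun_eq_iff brL10_brL01_dpp_eq[OF assms] by (simp add: dpp_def)
  then show ?thesis by blast
qed

end
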